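(* Let $0<c_1,c_2<1$ and $0<\eta\le 1$ be constants and let $m$ be a sufficiently large integer. Let $H(X,Y,Z)$ be a $3$-partite $3$-uniform hypergraph with $|X|=|Y|=c_1 m$ and $|Z|\geq c_2 2^{m^2}$. If $d_3(Z,(X\times Y))\geq\eta$, then there exists a complete $3$-partite $3$-uniform hypergraph $H'(X',Y',Z')$ that is a subhypergraph of $H$, with $X'\subseteq X$, $Y'\subseteq Y$, $Z'\subseteq Z$ and $|X'|=|Y'|=|Z'|\geq \frac{\eta}{4}\log|X|$.
   Context: A $3$-partite $3$-uniform hypergraph $H(X,Y,Z)$ has vertex set partitioned into $X,Y,Z$ and every edge contains exactly one vertex from each part. $d_3(Z,(X\times Y))$ is the number of edges of $H$ divided by $|X||Y||Z|$. A complete $3$-partite $3$-graph $H'(X',Y',Z')$ contains all triples with one vertex in each of $X',Y',Z'$. $\log$ is base $2$. *)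

theory Defs
  imports Complex_Main
begin

definition tripartite3 :: "'a set \<Rightarrow> 'b set \<Rightarrow> 'c set \<Rightarrow> ('a \<times> 'b \<times> 'c) set \<Rightarrow> bool" where
  "tripartite3 X Y Z E \<longleftrightarrow> finite X \<and> finite Y \<and> finite Z \<and> E \<subseteq> X \<times> Y \<times> Z"

definition d3 :: "'a set \<Rightarrow> 'b set \<Rightarrow> 'c set \<Rightarrow> ('a \<times> 'b \<times> 'c) set \<Rightarrow> real" where
  "d3 X Y Z E = real (card E) / (real (card X) * real (card Y) * real (card Z))"

definition complete_sub :: "'a set \<Rightarrow> 'b set \<Rightarrow> 'c set \<Rightarrow> ('a \<times> 'b \<times> 'c) set \<Rightarrow> bool" where
  "complete_sub X' Y' Z' E \<longleftrightarrow> X' \<times> Y' \<times> Z' \<subseteq> E"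

end

theory Submission
  imports Defs "HOL-Real_Asymp.Real_Asymp"
begin

text \<open>Each vertex z of Z has a link graph in X \<times> Y. By averaging, an (\<eta>/2)-fraction of the
  vertices of Z have links of density at least \<eta>/2; as there are only 2^(|X||Y|) possible links
  and |X||Y| \<le> m^2 - m, one link L is shared by at least (\<eta> c2/2) 2^m \<ge> m of them. Double counting
  pairs (x, S) with S a t-subset of the neighbourhood of x (the Kovari-Sos-Turan argument)
  turns the dense bipartite graph L into a complete bipartite graph K(t,t), where
  t = \<lceil>(\<eta>/4) log |X|\<rceil>; adding t of the vertices with link L gives the complete
  tripartite subgraph.\<close>

lemma exists_ge_average:
  fixes f :: "'a \<Rightarrow> real" and c :: real
  assumes "finite A" "A \<noteq> {}" "c * card A \<le> sum f A"
  shows "\<exists>a\<in>A. c \<le> f a"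
proof (rule ccontr)
  assume "\<not> ?thesis"
  then have "sum f A < sum (\<lambda>_. c) A"
    using assms(1,2) by (intro sum_strict_mono) auto
  with assms(3) show False by (simp add: mult.commute)
qed

lemma exists_large_fiber:
  assumes "finite A" "finite B" "f ` A \<subseteq> B" "B \<noteq> {}"
  obtains b where "b \<in> B" "card A \<le> card B * card {a\<in>A. f a = b}"
proof -
  have "card A = (\<Sum>b\<in>B. card {a\<in>A. f a = b})"
    using sum.group[OF assms(1-3), of "\<lambda>_. 1::nat"] by simp
  then have "real (card A) / card B * card B \<le> (\<Sum>b\<in>B. real (card {a\<in>A. f a = b}))"
    using assms(2,4) by simp
  then obtain b where "b \<in> B" "real (card A) / card B \<le> card {a\<in>A. f a = b}"
    using exists_ge_average[OF assms(2,4)] by blast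
  then have "real (card A) \<le> real (card B * card {a\<in>A. f a = b})"
    using assms(2,4) by (auto simp: divide_le_eq mult.commute card_gt_0_iff)
  then have "card A \<le> card B * card {a\<in>A. f a = b}"
    by (simp only: of_nat_le_iff)
  with \<open>b \<in> B\<close> show thesis
    by (rule that)
qed

lemma card_large_values_ge:
  fixes g :: "'a \<Rightarrow> real"
  assumes "finite A" "\<And>a. a \<in> A \<Longrightarrow> g a \<le> M" "0 \<le> \<theta>" "0 < M"
    "\<theta> * M * card A \<le> (\<Sum>a\<in>A. g a)"
  shows "\<theta>/2 * card A \<le> card {a\<in>A. \<theta>/2 * M \<le> g a}"
proof -
  define P where "P a \<longleftrightarrow> \<theta>/2 * M \<le> g a" for a
  have "(\<Sum>a\<in>A. g a) = (\<Sum>a\<in>{a\<in>A. P a}. g a) + (\<Sum>a\<in>{a\<in>A. \<not> P a}. g a)"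
    using sum.Int_Diff[OF assms(1), of g "Collect P"] by (simp add: Int_def Diff_eq Compl_eq)
  also have "(\<Sum>a\<in>{a\<in>A. P a}. g a) \<le> card {a\<in>A. P a} * M"
    using assms(2) by (intro sum_bounded_above) auto
  also have "(\<Sum>a\<in>{a\<in>A. \<not> P a}. g a) \<le> card {a\<in>A. \<not> P a} * (\<theta>/2 * M)"
    by (intro sum_bounded_above) (auto simp: P_def)
  also have "card {a\<in>A. \<not> P a} * (\<theta>/2 * M) \<le> card A * (\<theta>/2 * M)"
    using assms by (intro mult_right_mono) (auto intro!: card_mono)
  finally have "(\<theta>/2 * card A) * M \<le> card {a\<in>A. P a} * M"
    using assms(5) by (simp add: algebra_simps)
  then show ?thesis
    using assms(4) unfolding P_def by simp
qed

lemma biclique_of_common_neighbourhoods: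
  fixes N :: "'a \<Rightarrow> 'b set"
  assumes "finite A" "finite Y" "t \<le> card Y"
    and N: "\<And>x. x \<in> A \<Longrightarrow> N x \<subseteq> Y \<and> k \<le> card (N x)"
    and count: "real t * real (card Y choose t) \<le> real (card A) * real (k choose t)"
  obtains A' S where "A' \<subseteq> A" "S \<subseteq> Y" "card A' = t" "card S = t" "\<And>x. x \<in> A' \<Longrightarrow> S \<subseteq> N x"
proof -
  define T where "T = {S. S \<subseteq> Y \<and> card S = t}"
  have T: "finite T" "card T = card Y choose t"
    using assms(2) n_subsets[OF assms(2)] by (simp_all add: T_def)
  then have "T \<noteq> {}"
    using assms(3) by auto
  have choose: "card {S\<in>T. S \<subseteq> N x} = card (N x) choose t" if "x \<in> A" for x
  proof -
    have "{S\<in>T. S \<subseteq> N x} = {S. S \<subseteq> N x \<and> card S = t}"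
      using N[OF that] by (auto simp: T_def)
    moreover have "finite (N x)"
      using N[OF that] assms(2) finite_subset by blast
    ultimately show ?thesis
      by (simp add: n_subsets)
  qed
  have "card A * (k choose t) \<le> (\<Sum>x\<in>A. card {S\<in>T. S \<subseteq> N x})"
    using sum_bounded_below[of A "k choose t"] N by (simp add: choose binomial_right_mono)
  also have "\<dots> = (\<Sum>S\<in>T. card {x\<in>A. S \<subseteq> N x})"
    using sum.swap_restrict[OF assms(1) T(1), of "\<lambda>_ _. 1::nat"] by simp
  finally have "real (card A) * real (k choose t) \<le> (\<Sum>S\<in>T. real (card {x\<in>A. S \<subseteq> N x}))"
    by (simp flip: of_nat_mult of_nat_sum)
  with count T(2) have "real t * card T \<le> (\<Sum>S\<in>T. real (card {x\<in>A. S \<subseteq> N x}))"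
    by simp
  then obtain S where S: "S \<in> T" "t \<le> card {x\<in>A. S \<subseteq> N x}"
    using exists_ge_average[OF T(1) \<open>T \<noteq> {}\<close>] by fastforce
  then obtain A' where "A' \<subseteq> {x\<in>A. S \<subseteq> N x}" "card A' = t"
    by (meson obtain_subset_with_card_n)
  with S(1) show thesis
    by (intro that[of A' S]) (auto simp: T_def)
qed

lemma binomial_ge_ratio_power_mult:
  assumes "t \<le> k" "k \<le> n" "0 < n"
  shows "((real k - real t) / real n) ^ t * real (n choose t) \<le> real (k choose t)"
proof -
  have "((real k - real t) / real n) ^ t * real (n choose t)
      = (\<Prod>i=0..<t. (real k - real t) / real n * (real (n - i) / real (t - i)))"
    unfolding binomial_altdef_of_nat[OF order_trans[OF assms(1,2)]]
    by (simp only: prod.distrib prod_constant card_atLeastLessThan diff_zero)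
  also have "\<dots> \<le> (\<Prod>i=0..<t. real (k - i) / real (t - i))"
  proof (rule prod_mono)
    fix i assume i: "i \<in> {0..<t}"
    define q where "q = (real k - real t) / real n"
    have "q * real (n - i) \<le> q * real n"
      using assms i by (intro mult_left_mono) (auto simp: q_def)
    also have "\<dots> \<le> real (k - i)"
      using assms i by (simp add: q_def)
    finally have "q * real (n - i) / real (t - i) \<le> real (k - i) / real (t - i)"
      by (rule divide_right_mono) simp
    moreover have "0 \<le> q"
      using assms by (simp add: q_def)
    ultimately show "0 \<le> q * (real (n - i) / real (t - i)) \<and>
        q * (real (n - i) / real (t - i)) \<le> real (k - i) / real (t - i)"
      by simp
  qed
  also have "\<dots> = real (k choose t)"
    by (rule binomial_altdef_of_nat[OF assms(1), symmetric])
  finally show ?thesis .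
qed

lemma mult_binomial_le_of_ratio_power:
  fixes a b :: real
  assumes "t \<le> k" "k \<le> n" "0 < n" "0 \<le> b" "b \<le> k" "b \<le> a"
    and "real t \<le> b * ((b - t) / n) ^ t" "real t \<le> b"
  shows "real t * real (n choose t) \<le> a * real (k choose t)"
proof -
  have "real t * real (n choose t) \<le> b * (((b - t) / n) ^ t * real (n choose t))"
    using mult_right_mono[OF assms(7), of "real (n choose t)"] by (simp add: mult.assoc)
  also have "\<dots> \<le> b * (((real k - t) / n) ^ t * real (n choose t))"
    using assms(4,5,8) by (intro mult_left_mono mult_right_mono power_mono divide_right_mono) auto
  also have "\<dots> \<le> a * real (k choose t)"
    using binomial_ge_ratio_power_mult[OF assms(1-3)] assms(1,4,6)
    by (intro mult_mono) auto
  finally show ?thesis .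
qed

lemma dense_bipartite_has_biclique:
  fixes L :: "('a \<times> 'b) set" and \<theta> :: real
  assumes "finite X" "finite Y" "L \<subseteq> X \<times> Y" "card X = n" "card Y = n" "0 < n"
    and "0 \<le> \<theta>" "\<theta> \<le> 1" "\<theta> * (n * n) \<le> card L"
    and "real t \<le> \<theta>/2 * n" "real t \<le> \<theta>/2 * n * ((\<theta>/2 * n - t) / n) ^ t"
  obtains X' Y' where "X' \<subseteq> X" "Y' \<subseteq> Y" "card X' = t" "card Y' = t" "X' \<times> Y' \<subseteq> L"
proof -
  define N where "N x = {y. (x, y) \<in> L}" for x
  define A where "A = {x\<in>X. \<theta>/2 * n \<le> card (N x)}"
  define k where "k = nat \<lceil>\<theta>/2 * n\<rceil>"
  have NY: "N x \<subseteq> Y" for x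
    using assms(3) by (auto simp: N_def)
  have card_N: "card (N x) \<le> n" for x
    using card_mono[OF assms(2) NY] assms(5) by simp
  have "card L = (\<Sum>x\<in>X. card (N x))"
  proof -
    have "L = (SIGMA x:X. N x)"
      using assms(3) by (auto simp: N_def)
    moreover have "finite (N x)" for x
      using NY assms(2) finite_subset by blast
    ultimately show ?thesis
      using assms(1) by simp
  qed
  then have "\<theta>/2 * card X \<le> card A"
    unfolding A_def using assms card_N
    by (intro card_large_values_ge) (auto simp: mult.commute mult.left_commute)
  then have A: "\<theta>/2 * n \<le> card A"
    using assms(4) by simp
  have k_ge: "\<theta>/2 * n \<le> k"
    unfolding k_def by (rule real_nat_ceiling_ge)
  have "\<theta>/2 * n \<le> n"
    using mult_right_mono[of "\<theta>/2" 1 "real n"] assms(8) by simp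
  then have k_le: "k \<le> n"
    unfolding k_def by (simp add: nat_le_iff ceiling_le_iff)
  have "real t \<le> real k"
    using assms(10) k_ge by linarith
  then have k: "t \<le> k" "k \<le> n" "\<theta>/2 * n \<le> k"
    using k_le k_ge by simp_all
  have count: "real t * real (card Y choose t) \<le> card A * real (k choose t)"
    using mult_binomial_le_of_ratio_power[OF k(1,2) assms(6) _ k(3) A] assms(5,7,10,11) by simp
  have "finite A" "t \<le> card Y"
    using assms(1,5) k by (simp_all add: A_def)
  moreover have "\<And>x. x \<in> A \<Longrightarrow> N x \<subseteq> Y \<and> k \<le> card (N x)"
    using NY by (auto simp: A_def k_def nat_le_iff ceiling_le_iff)
  ultimately obtain X' Y' where "X' \<subseteq> A" "Y' \<subseteq> Y" "card X' = t" "card Y' = t"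
    "\<And>x. x \<in> X' \<Longrightarrow> Y' \<subseteq> N x"
    using biclique_of_common_neighbourhoods[OF _ assms(2)] count by metis
  then show thesis
    by (intro that[of X' Y']) (auto simp: A_def N_def)
qed

definition link :: "('a \<times> 'b \<times> 'c) set \<Rightarrow> 'c \<Rightarrow> ('a \<times> 'b) set" where
  "link E z = {(x, y). (x, y, z) \<in> E}"

lemma link_subset:
  assumes "tripartite3 X Y Z E"
  shows "link E z \<subseteq> X \<times> Y"
  using assms by (auto simp: tripartite3_def link_def)

lemma card_eq_sum_card_link:
  assumes "tripartite3 X Y Z E"
  shows "card E = (\<Sum>z\<in>Z. card (link E z))"
proof -
  have "E = (\<lambda>(z, x, y). (x, y, z)) ` (SIGMA z:Z. link E z)"
    using assms by (force simp: tripartite3_def link_def image_iff)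
  moreover have "inj_on (\<lambda>(z, x, y). (x, y, z)) (SIGMA z:Z. link E z)"
    by (auto simp: inj_on_def)
  ultimately have "card E = card (SIGMA z:Z. link E z)"
    by (metis card_image)
  moreover have "finite (link E z)" for z
    using link_subset[OF assms] assms finite_subset by (fastforce simp: tripartite3_def)
  ultimately show ?thesis
    using assms by (simp add: tripartite3_def)
qed

lemma dense_common_link:
  fixes \<eta> :: real
  assumes H: "tripartite3 X Y Z E" and "0 < card X * card Y" "0 \<le> \<eta>" "\<eta> \<le> 1"
    and "\<eta> * (card X * card Y * card Z) \<le> card E"
  obtains L where "L \<subseteq> X \<times> Y" "\<eta>/2 * (card X * card Y) \<le> card L"
    "\<eta>/2 * card Z \<le> 2 ^ (card X * card Y) * card {z\<in>Z. link E z = L}"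
proof -
  define n2 where "n2 = real (card X * card Y)"
  define Zd where "Zd = {z\<in>Z. \<eta>/2 * n2 \<le> card (link E z)}"
  define B where "B = {L. L \<subseteq> X \<times> Y \<and> \<eta>/2 * n2 \<le> card L}"
  have fin: "finite X" "finite Y" "finite Z"
    using H by (simp_all add: tripartite3_def)
  have "card (link E z) \<le> card X * card Y" for z
    using card_mono[OF _ link_subset[OF H]] fin by (simp add: card_cartesian_product)
  then have card_link: "card (link E z) \<le> n2" for z
    unfolding n2_def of_nat_le_iff .
  have Zd: "\<eta>/2 * card Z \<le> card Zd"
    unfolding Zd_def using assms fin(3) card_link card_eq_sum_card_link[OF H]
    by (intro card_large_values_ge) (auto simp: n2_def mult.commute mult.left_commute)
  have "\<eta>/2 * n2 \<le> n2"
    using mult_right_mono[of "\<eta>/2" 1 n2] assms(4) by (simp add: n2_def)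
  then have B: "X \<times> Y \<in> B" "B \<subseteq> Pow (X \<times> Y)"
    by (auto simp: B_def n2_def card_cartesian_product)
  have "finite Zd" "finite B" "link E ` Zd \<subseteq> B" "B \<noteq> {}"
    using fin B link_subset[OF H] finite_subset[OF B(2)] by (auto simp: Zd_def B_def)
  then obtain L where L: "L \<in> B" "card Zd \<le> card B * card {z\<in>Zd. link E z = L}"
    by (rule exists_large_fiber)
  have "card B \<le> 2 ^ (card X * card Y)"
    using card_mono[OF _ B(2)] fin by (simp add: card_Pow card_cartesian_product)
  moreover have "card {z\<in>Zd. link E z = L} \<le> card {z\<in>Z. link E z = L}"
    using fin by (intro card_mono) (auto simp: Zd_def)
  ultimately have "card B * card {z\<in>Zd. link E z = L} \<le> 2 ^ (card X * card Y) * card {z\<in>Z. link E z = L}"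
    by (rule mult_le_mono)
  with L(2) have "real (card Zd) \<le> real (2 ^ (card X * card Y) * card {z\<in>Z. link E z = L})"
    by (intro of_nat_mono) (rule order_trans)
  with Zd have "\<eta>/2 * card Z \<le> 2 ^ (card X * card Y) * card {z\<in>Z. link E z = L}"
    by simp
  with L(1) show thesis
    by (intro that) (auto simp: B_def n2_def)
qed

lemma complete_subgraph_of_dense_tripartite:
  fixes \<eta> :: real
  assumes H: "tripartite3 X Y Z E" and n: "card X = n" "card Y = n" "0 < n"
    and \<eta>: "0 \<le> \<eta>" "\<eta> \<le> 1" "\<eta> * (n * n * card Z) \<le> card E"
    and t: "real t \<le> \<eta>/4 * n" "real t \<le> \<eta>/4 * n * ((\<eta>/4 * n - t) / n) ^ t"
      "real t * 2 ^ (n * n) \<le> \<eta>/2 * card Z"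
  obtains X' Y' Z' where "X' \<subseteq> X" "Y' \<subseteq> Y" "Z' \<subseteq> Z" "complete_sub X' Y' Z' E"
    "card X' = t" "card Y' = t" "card Z' = t"
proof -
  define F where "F L = {z\<in>Z. link E z = L}" for L
  obtain L where L: "L \<subseteq> X \<times> Y" "\<eta>/2 * (n * n) \<le> card L" "\<eta>/2 * card Z \<le> 2 ^ (n * n) * card (F L)"
    using dense_common_link[OF H] n \<eta> unfolding F_def by auto
  have fin: "finite X" "finite Y"
    using H by (simp_all add: tripartite3_def)
  have "real t * 2 ^ (n * n) \<le> real (card (F L)) * 2 ^ (n * n)"
    using order_trans[OF t(3) L(3)] by (simp add: mult.commute)
  then have "t \<le> card (F L)"
    by simp
  then obtain Z' where Z': "Z' \<subseteq> F L" "card Z' = t"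
    by (meson obtain_subset_with_card_n)
  obtain X' Y' where XY: "X' \<subseteq> X" "Y' \<subseteq> Y" "card X' = t" "card Y' = t" "X' \<times> Y' \<subseteq> L"
    using dense_bipartite_has_biclique[OF fin L(1) n, of "\<eta>/2" t] \<eta> t L(2) by auto
  have "complete_sub X' Y' Z' E"
    using XY(5) Z'(1) by (auto simp: complete_sub_def F_def link_def)
  with XY Z' show thesis
    by (intro that[of X' Y' Z']) (auto simp: F_def)
qed

lemma one_plus_mult_log2_pos:
  fixes \<beta> :: real
  assumes "0 < \<beta>"
  shows "0 < 1 + \<beta> * log 2 \<beta>"
proof -
  define s where "s = sqrt \<beta>"
  have s: "0 < s" "\<beta> = s * s"
    using assms by (simp_all add: s_def)
  have "- (\<beta> * ln \<beta>) = 2 * s * (s * ln (1 / s))"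
    using s by (simp add: ln_mult ln_div)
  also have "\<dots> \<le> 2 * s * (s * (1 / s - 1))"
    using ln_le_minus_one[of "1 / s"] s(1) by (intro mult_left_mono) auto
  also have "\<dots> = 1/2 - 2 * (s - 1/2)^2"
    using s(1) by (simp add: field_simps power2_eq_square)
  also have "\<dots> \<le> 1/2"
    by simp
  also have "\<dots> < ln 2"
    using ln_add1_gt[of 1] by simp
  finally show ?thesis
    by (simp add: log_def field_simps)
qed

lemma biclique_size_bounds:
  fixes \<beta> x :: real
  assumes \<beta>: "0 < \<beta>" "\<beta> \<le> 1" and x: "2 \<le> x"
    and quadratic: "2 * (\<beta> * log 2 x + 1)^2 \<le> \<beta> * x"
    and power: "\<beta> * log 2 x + 1 \<le> \<beta>^2/2 * x powr (1 + \<beta> * log 2 \<beta>)"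
  defines "t \<equiv> nat \<lceil>\<beta> * log 2 x\<rceil>"
  shows "\<beta> * log 2 x \<le> t" "t \<le> \<beta> * x" "t \<le> \<beta> * x * ((\<beta> * x - t) / x) ^ t"
proof -
  define u where "u = \<beta> * log 2 x + 1"
  have nonneg: "0 \<le> \<beta> * log 2 x"
    using \<beta> x by simp
  then have t_le: "real t \<le> u"
    unfolding t_def u_def using of_int_ceiling_le_add_one by simp
  show t_ge: "\<beta> * log 2 x \<le> t"
    unfolding t_def by (rule real_nat_ceiling_ge)
  have "real t * real t \<le> u * u"
    using t_le by (intro mult_mono) auto
  also have u2: "u * u \<le> \<beta> * x / 2"
    using quadratic by (simp add: u_def power2_eq_square)
  finally have tt: "real t * real t \<le> \<beta> * x / 2" .
  have "1 \<le> u"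
    using nonneg by (simp add: u_def)
  then have "u \<le> u * u"
    by simp
  with t_le u2 show t_bx: "t \<le> \<beta> * x"
    by linarith
  define r where "r = real t / (\<beta> * x)"
  have r: "0 \<le> r" "r \<le> 1" "real t * r \<le> 1/2"
    using t_bx tt \<beta> x by (auto simp: r_def field_simps)
  have "1/2 \<le> 1 + real t * (- r)"
    using r by simp
  also have "\<dots> \<le> (1 - r) ^ t"
    using Bernoulli_inequality[of "- r" t] r by simp
  finally have half: "1/2 \<le> (1 - r) ^ t" .
  \<comment> \<open>\<beta> powr (\<beta> log x) = x powr (\<beta> log \<beta>) is the source of the exponent in \<open>power\<close>\<close>
  have "\<beta> powr u = \<beta> * \<beta> powr (\<beta> * log 2 x)"
    using \<beta> by (simp add: u_def powr_add)
  also have "\<beta> powr (\<beta> * log 2 x) = x powr (\<beta> * log 2 \<beta>)"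
    using \<beta> x by (simp add: powr_def log_def)
  also have "x powr (\<beta> * log 2 \<beta>) = x powr (1 + \<beta> * log 2 \<beta>) / x"
    using x by (simp add: powr_add)
  finally have "u \<le> \<beta> * x * \<beta> powr u * (1/2)"
    using power x by (simp add: u_def power2_eq_square)
  also have "\<dots> \<le> \<beta> * x * \<beta> ^ t * (1 - r) ^ t"
    using powr_mono'[OF t_le, of \<beta>] half \<beta> x by (intro mult_mono) (auto simp: powr_realpow)
  also have "\<dots> = \<beta> * x * ((\<beta> * x - t) / x) ^ t"
    using \<beta> x by (simp add: r_def field_simps power_mult_distrib)
  finally show "t \<le> \<beta> * x * ((\<beta> * x - t) / x) ^ t"
    using t_le by simp
qed

lemma eventually_biclique_size_conditions:
  fixes c \<beta> \<delta> :: real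
  assumes "0 < c" "0 < \<beta>" "0 < \<delta>"
  shows "\<forall>\<^sub>F m in sequentially. 2 \<le> c * real m \<and>
     2 * (\<beta> * log 2 (c * real m) + 1)^2 \<le> \<beta> * (c * real m) \<and>
     \<beta> * log 2 (c * real m) + 1 \<le> \<beta>^2/2 * (c * real m) powr \<delta>"
  using assms by (intro eventually_conj) real_asymp+

lemma eventually_le_mult_two_power:
  fixes a :: real
  assumes "0 < a"
  shows "\<forall>\<^sub>F m in sequentially. real m \<le> a * 2 ^ m"
  using assms by real_asymp

lemma mult_two_power_square_le:
  fixes a :: real
  assumes "n < m" "real t \<le> real m" "real m \<le> a * 2 ^ m"
  shows "real t * 2 ^ (n * n) \<le> a * 2 ^ (m ^ 2)"
proof -
  have "0 < real m"
    using assms(1) by simp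
  with assms(3) have "0 < a * 2 ^ m"
    by linarith
  then have "0 < a"
    by (simp add: zero_less_mult_iff)
  have "n * n \<le> (m - 1) * (m - 1)"
    using assms(1) by (intro mult_le_mono) auto
  then have "n * n + m \<le> m ^ 2"
    using assms(1) by (cases m) (auto simp: power2_eq_square)
  have "real t * 2 ^ (n * n) \<le> a * 2 ^ m * 2 ^ (n * n)"
    using assms(2,3) by (intro mult_right_mono) auto
  also have "\<dots> = a * 2 ^ (n * n + m)"
    by (simp add: power_add)
  also have "\<dots> \<le> a * 2 ^ (m ^ 2)"
    using \<open>0 < a\<close> \<open>n * n + m \<le> m ^ 2\<close> by (intro mult_left_mono power_increasing) auto
  finally show ?thesis .
qed

lemma card_ge_of_d3_ge:
  assumes "\<eta> \<le> d3 X Y Z E" "0 < card X" "0 < card Y" "0 < card Z"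
  shows "\<eta> * (card X * card Y * card Z) \<le> card E"
  using assms by (simp add: d3_def pos_le_divide_eq)

lemma complete_subgraph_at_size:
  fixes c1 c2 \<eta> :: real
  assumes "c1 < 1" "0 < c2" "0 < \<eta>" "\<eta> \<le> 1"
    and size: "2 \<le> c1 * real m"
      "2 * (\<eta>/4 * log 2 (c1 * real m) + 1)^2 \<le> \<eta>/4 * (c1 * real m)"
      "\<eta>/4 * log 2 (c1 * real m) + 1 \<le> (\<eta>/4)^2/2 * (c1 * real m) powr (1 + \<eta>/4 * log 2 (\<eta>/4))"
      "real m \<le> \<eta> * c2 / 2 * 2 ^ m"
    and H: "tripartite3 X Y Z E" and X: "real (card X) = c1 * real m"
      and Y: "real (card Y) = c1 * real m" and Z: "c2 * 2 ^ (m ^ 2) \<le> real (card Z)"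
      and d: "\<eta> \<le> d3 X Y Z E"
  shows "\<exists>X' Y' Z'. X' \<subseteq> X \<and> Y' \<subseteq> Y \<and> Z' \<subseteq> Z \<and> complete_sub X' Y' Z' E \<and>
           card X' = card Y' \<and> card Y' = card Z' \<and> \<eta> / 4 * log 2 (real (card X)) \<le> real (card X')"
proof -
  define n where "n = card X"
  define t where "t = nat \<lceil>\<eta>/4 * log 2 n\<rceil>"
  have \<eta>: "0 < \<eta>/4" "\<eta>/4 \<le> 1"
    using assms(3,4) by simp_all
  have n: "2 \<le> real n" "real n = c1 * real m" "card Y = n"
    using size(1) X Y by (simp_all add: n_def)
  have t: "\<eta>/4 * log 2 n \<le> t" "t \<le> \<eta>/4 * n" "t \<le> \<eta>/4 * n * ((\<eta>/4 * n - t) / n) ^ t"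
    using biclique_size_bounds[OF \<eta> n(1)] size(2,3) n(2) by (simp_all add: t_def)
  have "0 < real m"
    using n by (auto intro: ccontr)
  from mult_strict_right_mono[OF assms(1) this] n(2) have "real n < real m"
    by simp
  then have "n < m" "real t \<le> real m"
    using t(2) mult_right_mono[OF \<eta>(2), of "real n"] by simp_all
  then have "real t * 2 ^ (n * n) \<le> \<eta> * c2 / 2 * 2 ^ (m ^ 2)"
    using size(4) by (rule mult_two_power_square_le)
  also have "\<dots> \<le> \<eta> / 2 * card Z"
    using Z assms(3) by simp
  finally have tZ: "real t * 2 ^ (n * n) \<le> \<eta> / 2 * card Z" .
  have "0 < c2 * 2 ^ (m ^ 2)"
    using assms(2) by simp
  with Z have "0 < card Z"
    by linarith
  then have "\<eta> * (n * n * card Z) \<le> card E"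
    using card_ge_of_d3_ge[OF d] n by (simp add: n_def)
  then obtain X' Y' Z' where "X' \<subseteq> X" "Y' \<subseteq> Y" "Z' \<subseteq> Z" "complete_sub X' Y' Z' E"
    "card X' = t" "card Y' = t" "card Z' = t"
    using complete_subgraph_of_dense_tripartite[OF H n_def[symmetric] n(3) _ _ assms(4) _ t(2,3) tZ]
      n(1) assms(3) by (metis less_imp_le of_nat_0_less_iff zero_less_numeral less_le_trans)
  moreover have "\<eta> / 4 * log 2 (real (card X)) \<le> t"
    using t(1) by (simp add: n_def)
  ultimately show ?thesis
    by (metis (no_types))
qed

theorem lemma4:
  fixes c1 c2 \<eta> :: real
  assumes "0 < c1" "c1 < 1" "0 < c2" "c2 < 1" "0 < \<eta>" "\<eta> \<le> 1"
  shows "\<exists>M::nat. \<forall>m\<ge>M. \<forall>(X::nat set) (Y::nat set) (Z::nat set) E.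
           tripartite3 X Y Z E \<and>
           real (card X) = c1 * real m \<and> real (card Y) = c1 * real m \<and>
           real (card Z) \<ge> c2 * 2 ^ (m ^ 2) \<and>
           d3 X Y Z E \<ge> \<eta>
           \<longrightarrow> (\<exists>X' Y' Z'. X' \<subseteq> X \<and> Y' \<subseteq> Y \<and> Z' \<subseteq> Z \<and>
                  complete_sub X' Y' Z' E \<and>
                  card X' = card Y' \<and> card Y' = card Z' \<and>
                  real (card X') \<ge> \<eta> / 4 * log 2 (real (card X)))"
proof -
  have "0 < \<eta> / 4" "0 < \<eta> * c2 / 2"
    using assms by simp_all
  from eventually_conj[OF eventually_biclique_size_conditions[OF assms(1) this(1)
        one_plus_mult_log2_pos[OF this(1)]] eventually_le_mult_two_power[OF this(2)]]
  obtain M where "\<And>m. M \<le> m \<Longrightarrow> 2 \<le> c1 * real m \<and>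
     2 * (\<eta>/4 * log 2 (c1 * real m) + 1)^2 \<le> \<eta>/4 * (c1 * real m) \<and>
     \<eta>/4 * log 2 (c1 * real m) + 1 \<le> (\<eta>/4)^2/2 * (c1 * real m) powr (1 + \<eta>/4 * log 2 (\<eta>/4)) \<and>
     real m \<le> \<eta> * c2 / 2 * 2 ^ m"
    unfolding eventually_sequentially by blast
  then show ?thesis
    by (intro exI[of _ M] allI impI) (use complete_subgraph_at_size[OF assms(2,3,5,6)] in metis)
qed

end
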